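(* Let $\mathbb K\subset\mathbb{R}^{d_{\mathrm{input}}}$ be bounded and let $\tilde g:\mathbb K\to\mathbb{R}$ be 1-Lipschitz with respect to the $\ell_\infty$-norm, i.e. $|\tilde g(\mathbf x_1)-\tilde g(\mathbf x_2)|\le\|\mathbf x_1-\mathbf x_2\|_\infty$. Then for every $\epsilon>0$ there exists an $\ell_\infty$-dist net $g$ with scalar output, all of whose layers have width at most $d_{\mathrm{input}}+2$, such that $|g(\mathbf x)-\tilde g(\mathbf x)|\le\epsilon$ for all $\mathbf x\in\mathbb K$.
   Context: An $L$-layer $\ell_\infty$-dist net takes $\mathbf x^{(0)}=\mathbf x\in\mathbb{R}^{d_{\mathrm{input}}}$ and computes, for $1\le l\le L$, $1\le k\le d_l$, $x^{(l)}_k=\|\mathbf x^{(l-1)}-\mathbf w^{(l,k)}\|_\infty+b^{(l,k)}$, with arbitrary real parameters $\mathbf w^{(l,k)}\in\mathbb{R}^{d_{l-1}}$ ($d_0=d_{\mathrm{input}}$) and $b^{(l,k)}\in\mathbb{R}$; its width is $\max_l d_l$. For a scalar-output net ($d_L=1$) the computed function is $g(\mathbf x)=-x^{(L)}_1$. The depth $L$ is arbitrary (finite). *)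

theory Defs
  imports "HOL-Analysis.Analysis"
begin

text \<open>Vectors in R^n are represented as real lists of length n.
  The l-infinity distance of two vectors of equal length.\<close>
definition linf_norm :: "real list \<Rightarrow> real" where
  "linf_norm v = foldr (\<lambda>a m. max \<bar>a\<bar> m) v 0"

definition linf_dist :: "real list \<Rightarrow> real list \<Rightarrow> real" where
  "linf_dist x w = linf_norm (map2 (-) x w)"

type_synonym neuron = "real list \<times> real"
type_synonym layer = "neuron list"
type_synonym net = "layer list"

definition eval_layer :: "layer \<Rightarrow> real list \<Rightarrow> real list" where
  "eval_layer ly x = map (\<lambda>(w, b). linf_dist x w + b) ly"

definition eval_net :: "net \<Rightarrow> real list \<Rightarrow> real list" where
  "eval_net N x = foldl (\<lambda>v ly. eval_layer ly v) x N"

fun wf_layers :: "nat \<Rightarrow> net \<Rightarrow> bool" where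
  "wf_layers d [] = True"
| "wf_layers d (ly # N) =
     (ly \<noteq> [] \<and> (\<forall>(w, b) \<in> set ly. length w = d) \<and> wf_layers (length ly) N)"

definition wf_net :: "nat \<Rightarrow> net \<Rightarrow> bool" where
  "wf_net d N = (N \<noteq> [] \<and> wf_layers d N)"

definition width :: "net \<Rightarrow> nat" where
  "width N = Max (set (0 # map length N))"

definition scalar_net :: "nat \<Rightarrow> net \<Rightarrow> bool" where
  "scalar_net d N = (wf_net d N \<and> length (last N) = 1)"

definition net_fun :: "net \<Rightarrow> real list \<Rightarrow> real" where
  "net_fun N x = - hd (eval_net N x)"

end

theory Submission
  imports Defs
begin

(* Approximate g' by the truncated McShane envelope  min (B - |x|) (min_{s in S} g' s + |x - s|),
   S a finite eps/2-net of K and |.| the l-infinity norm: by the Lipschitz bound every term is at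
   least g' x, and the term of a point s within eps/2 of x is at most g' x + eps.
   An l-infinity-dist net evaluates the negated envelope as a running maximum N.  Its basic gadget
   is a neuron whose weights on a set J of coordinates are pushed far away by a large constant;
   such a neuron outputs a maximum of signed differences over J, which lets it copy a coordinate or
   form one-sided maxima.  Carrying x @ [N] along, three layers per point s compute
   max_j (x_j - s_j), then |x - s| + g' s, then max N (-(g' s + |x - s|)); hence width d + 2.
*)

lemma linf_norm_eq_Max: "linf_norm v = Max (insert 0 (abs ` set v))"
  by (induction v) (auto simp: linf_norm_def max.left_commute insert_commute[of 0])

lemma linf_norm_nonneg: "0 \<le> linf_norm v"
  by (simp add: linf_norm_eq_Max)

lemma abs_le_linf_norm: "y \<in> set v \<Longrightarrow> \<bar>y\<bar> \<le> linf_norm v"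
  by (simp add: linf_norm_eq_Max)

lemma linf_dist_eq_Max:
  assumes "length v = n" "length w = n"
  shows "linf_dist v w = Max (insert 0 ((\<lambda>j. \<bar>v!j - w!j\<bar>) ` {..<n}))"
proof -
  have "abs ` set (map2 (-) v w) = (\<lambda>j. \<bar>v!j - w!j\<bar>) ` {..<n}"
    using assms by (auto simp: set_zip image_iff)
  then show ?thesis by (simp add: linf_dist_def linf_norm_eq_Max)
qed

lemma linf_dist_nonneg: "0 \<le> linf_dist v w"
  by (simp add: linf_dist_def linf_norm_eq_Max)

lemma linf_dist_le_iff:
  assumes "length v = n" "length w = n" "0 \<le> t"
  shows "linf_dist v w \<le> t \<longleftrightarrow> (\<forall>j<n. \<bar>v!j - w!j\<bar> \<le> t)"
  using assms by (auto simp: linf_dist_eq_Max)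

lemma linf_dist_le_add:
  assumes "length v = length w"
  shows "linf_dist v w \<le> linf_norm v + linf_norm w"
proof -
  have "\<bar>v!j - w!j\<bar> \<le> linf_norm v + linf_norm w" if "j < length v" for j
    using that assms abs_le_linf_norm[of "v!j" v] abs_le_linf_norm[of "w!j" w] by simp
  then show ?thesis
    using assms linf_dist_le_iff[OF refl assms[symmetric]] linf_norm_nonneg[of v] linf_norm_nonneg[of w]
    by simp
qed

lemma linf_dist_replicate_0: "length v = n \<Longrightarrow> linf_dist v (replicate n 0) = linf_norm v"
  by (simp add: linf_dist_def map2_map_map[symmetric] zip_replicate2 o_def)

lemma linf_dist_eq_max_signed_Max:
  assumes "length v = n" "length w = n" "n > 0"
  shows "linf_dist v w = max (Max ((\<lambda>j. v!j - w!j) ` {..<n})) (Max ((\<lambda>j. w!j - v!j) ` {..<n}))"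
proof -
  let ?D = "(\<lambda>j. v!j - w!j) ` {..<n} \<union> (\<lambda>j. w!j - v!j) ` {..<n}"
  have "v!0 - w!0 \<in> ?D" "w!0 - v!0 \<in> ?D" using assms(3) by auto
  moreover have "0 \<le> v!0 - w!0 \<or> 0 \<le> w!0 - v!0" by linarith
  ultimately have "\<exists>y\<in>?D. 0 \<le> y" by blast
  then have "linf_dist v w = Max ?D"
    unfolding linf_dist_eq_Max[OF assms(1,2)] by (intro Max_eq_if) (auto simp: abs_if)
  then show ?thesis using assms(3) by (subst (asm) Max_Un) auto
qed

lemma linf_dist_eq_Max_on:
  assumes "length v = n" "length w = n" "J \<noteq> {}" "J \<subseteq> {..<n}"
    and dominated: "\<forall>i\<in>J. \<forall>j<n. j \<notin> J \<longrightarrow> \<bar>v!j - w!j\<bar> \<le> \<bar>v!i - w!i\<bar>"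
  shows "linf_dist v w = Max ((\<lambda>j. \<bar>v!j - w!j\<bar>) ` J)"
proof -
  let ?f = "\<lambda>j. \<bar>v!j - w!j\<bar>"
  obtain i where "i \<in> J" using assms(3) by blast
  have "finite J" using assms(4) finite_subset by blast
  have "\<exists>z\<in>?f ` J. y \<le> z" if "y \<in> insert 0 (?f ` {..<n})" for y
    using that dominated \<open>i \<in> J\<close> by (cases "y \<in> ?f ` J") force+
  moreover have "\<exists>y\<in>insert 0 (?f ` {..<n}). z \<le> y" if "z \<in> ?f ` J" for z
    using that assms(4) by force
  ultimately show ?thesis
    unfolding linf_dist_eq_Max[OF assms(1,2)] using \<open>finite J\<close> by (intro Max_eq_if) auto
qed

lemma Max_insert_max:
  fixes A :: "'a::linorder set"
  assumes "finite A"
  shows "Max (insert (max a b) A) = Max (insert a (insert b A))"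
  using assms by (cases "A = {}") (simp_all add: max.assoc)

lemma abs_diff_less_if_floor_div_eq:
  fixes a b \<delta> :: real
  assumes "0 < \<delta>" "\<lfloor>a/\<delta>\<rfloor> = \<lfloor>b/\<delta>\<rfloor>"
  shows "\<bar>a - b\<bar> < \<delta>"
proof -
  have "\<bar>a/\<delta> - b/\<delta>\<bar> < 1"
    using assms(2) of_int_floor_le[of "a/\<delta>"] of_int_floor_le[of "b/\<delta>"]
      real_of_int_floor_add_one_gt[of "a/\<delta>"] real_of_int_floor_add_one_gt[of "b/\<delta>"] by linarith
  then show ?thesis using assms(1) by (simp add: diff_divide_distrib[symmetric])
qed

lemma finite_linf_cover:
  assumes "0 < \<delta>" and dim: "\<forall>x\<in>K. length x = d" and bdd: "\<forall>x\<in>K. linf_norm x \<le> M"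
  shows "\<exists>S. finite S \<and> S \<subseteq> K \<and> (\<forall>x\<in>K. \<exists>s\<in>S. linf_dist x s \<le> \<delta>)"
proof -
  define cell where "cell x = map (\<lambda>a. \<lfloor>a/\<delta>\<rfloor>) x" for x :: "real list"
  define k where "k = \<lceil>M/\<delta>\<rceil>"
  have "\<lfloor>a/\<delta>\<rfloor> \<in> {-k..k}" if "x \<in> K" "a \<in> set x" for x a
  proof -
    have "\<bar>a\<bar> \<le> M" using that bdd abs_le_linf_norm order.trans by blast
    then have "\<bar>a/\<delta>\<bar> \<le> M/\<delta>" using \<open>0 < \<delta>\<close> by (simp add: abs_divide divide_right_mono)
    moreover have "M/\<delta> \<le> k" unfolding k_def by (rule le_of_int_ceiling)
    ultimately have "-k \<le> a/\<delta>" "a/\<delta> \<le> k" by linarith+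
    then show ?thesis by (simp add: le_floor_iff floor_le_iff)
  qed
  then have "cell ` K \<subseteq> {l. set l \<subseteq> {-k..k} \<and> length l = d}"
    using dim by (auto simp: cell_def)
  then have "finite (cell ` K)" using finite_lists_length_eq[of "{-k..k}" d] finite_subset by blast
  obtain rep where rep: "\<forall>c\<in>cell ` K. rep c \<in> K \<and> cell (rep c) = c"
    using bchoice[of "cell ` K" "\<lambda>c y. y \<in> K \<and> cell y = c"] by blast
  have "linf_dist x (rep (cell x)) \<le> \<delta>" if "x \<in> K" for x
  proof -
    have same_cell: "cell (rep (cell x)) = cell x" and "rep (cell x) \<in> K" using rep that by auto
    then have "length (rep (cell x)) = d" using dim by blast
    moreover have "\<bar>x!j - rep (cell x) ! j\<bar> < \<delta>" if "j < d" for j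
    proof (rule abs_diff_less_if_floor_div_eq[OF \<open>0 < \<delta>\<close>])
      show "\<lfloor>x!j/\<delta>\<rfloor> = \<lfloor>rep (cell x) ! j/\<delta>\<rfloor>"
        using arg_cong[OF same_cell, of "\<lambda>l. l!j"] that dim \<open>x \<in> K\<close> \<open>length (rep (cell x)) = d\<close>
        by (simp add: cell_def)
    qed
    ultimately show ?thesis
      using linf_dist_le_iff[of x d "rep (cell x)" \<delta>] dim that \<open>0 < \<delta>\<close> by fastforce
  qed
  then show ?thesis
    using rep \<open>finite (cell ` K)\<close> by (intro exI[of _ "rep ` cell ` K"]) auto
qed

lemma mcshane_approx:
  fixes g :: "'a \<Rightarrow> real" and dist :: "'a \<Rightarrow> 'a \<Rightarrow> real"
  assumes "finite S" and lip: "\<forall>s\<in>S. \<bar>g x - g s\<bar> \<le> dist x s" and "N0 \<le> - g x"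
    and "s0 \<in> S" "dist x s0 \<le> \<delta>"
  shows "\<bar>- Max (insert N0 ((\<lambda>s. -(g s + dist x s)) ` S)) - g x\<bar> \<le> 2*\<delta>"
proof -
  let ?V = "Max (insert N0 ((\<lambda>s. -(g s + dist x s)) ` S))"
  have "?V \<le> - g x" using assms(1-3) by (auto simp: abs_le_iff)
  moreover have "-(g s0 + dist x s0) \<le> ?V" using assms(1,4) by (intro Max_ge) auto
  ultimately show ?thesis using lip assms(4,5) by (auto simp: abs_le_iff)
qed

definition eval_neuron :: "neuron \<Rightarrow> real list \<Rightarrow> real" where
  "eval_neuron nr v = linf_dist v (fst nr) + snd nr"

lemma eval_layer_eq_map: "eval_layer ly v = map (\<lambda>nr. eval_neuron nr v) ly"
  by (simp add: eval_layer_def eval_neuron_def case_prod_beta)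

lemma eval_net_Nil [simp]: "eval_net [] x = x"
  by (simp add: eval_net_def)

lemma eval_net_Cons [simp]: "eval_net (ly # N) x = eval_net N (eval_layer ly x)"
  by (simp add: eval_net_def)

lemma eval_net_append [simp]: "eval_net (N1 @ N2) x = eval_net N2 (eval_net N1 x)"
  by (simp add: eval_net_def)

(* For C large the coordinates in J dominate the distance, |v_j - w_j| = C + \<sigma> j * (v_j - c j),
   and the bias cancels the offset C. *)
definition signed_max_neuron ::
    "nat \<Rightarrow> real \<Rightarrow> nat set \<Rightarrow> (nat \<Rightarrow> real) \<Rightarrow> (nat \<Rightarrow> real) \<Rightarrow> real \<Rightarrow> neuron" where
  "signed_max_neuron n C J \<sigma> c b = (map (\<lambda>j. if j \<in> J then c j - \<sigma> j * C else 0) [0..<n], b - C)"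

lemma length_signed_max_neuron [simp]: "length (fst (signed_max_neuron n C J \<sigma> c b)) = n"
  by (simp add: signed_max_neuron_def)

lemma eval_signed_max_neuron:
  assumes len: "length v = n" and J: "J \<noteq> {}" "J \<subseteq> {..<n}"
    and v_bound: "\<forall>y\<in>set v. \<bar>y\<bar> \<le> R" and c_bound: "\<forall>j\<in>J. \<bar>c j\<bar> \<le> R"
    and sign: "\<forall>j\<in>J. \<sigma> j \<in> {1, -1}" and C: "3*R < C"
  shows "eval_neuron (signed_max_neuron n C J \<sigma> c b) v = Max ((\<lambda>j. \<sigma> j * (v!j - c j)) ` J) + b"
proof -
  define w where "w = fst (signed_max_neuron n C J \<sigma> c b)"
  define T where "T j = \<sigma> j * (v!j - c j)" for j
  have "finite J" using J(2) finite_subset by blast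
  have v_nth: "\<bar>v!j\<bar> \<le> R" if "j < n" for j using that len v_bound by simp
  have w_nth: "w!j = (if j \<in> J then c j - \<sigma> j * C else 0)" if "j < n" for j
    using that by (simp add: w_def signed_max_neuron_def)
  have len_w: "length w = n" by (simp add: w_def signed_max_neuron_def)
  have in_J: "\<bar>v!j - w!j\<bar> = T j + C" and above_R: "R \<le> T j + C" if "j \<in> J" for j
  proof -
    have "\<bar>v!j\<bar> \<le> R" using that J(2) v_nth by blast
    moreover have "\<bar>c j\<bar> \<le> R" "\<sigma> j \<in> {1, -1}" using that c_bound sign by auto
    moreover have "w!j = c j - \<sigma> j * C" using that J w_nth by auto
    ultimately show "\<bar>v!j - w!j\<bar> = T j + C" "R \<le> T j + C" using C by (auto simp: T_def)
  qed
  have off_J: "\<bar>v!j - w!j\<bar> \<le> R" if "j < n" "j \<notin> J" for j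
    using that v_nth w_nth by auto
  have "linf_dist v w = Max ((\<lambda>j. \<bar>v!j - w!j\<bar>) ` J)"
    using in_J above_R off_J by (intro linf_dist_eq_Max_on[OF len len_w J]) force
  also have "\<dots> = Max ((\<lambda>j. T j + C) ` J)" using in_J by simp
  also have "\<dots> = Max (T ` J) + C" using \<open>finite J\<close> J(1) by (rule Max_add_commute)
  finally show ?thesis by (simp add: eval_neuron_def w_def T_def signed_max_neuron_def)
qed

definition copy_neuron :: "nat \<Rightarrow> real \<Rightarrow> nat \<Rightarrow> neuron" where
  "copy_neuron n C i = signed_max_neuron n C {i} (\<lambda>_. 1) (\<lambda>_. 0) 0"

lemma eval_copy_neuron:
  assumes "length v = n" "i < n" "\<forall>y\<in>set v. \<bar>y\<bar> \<le> R" "3*R < C"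
  shows "eval_neuron (copy_neuron n C i) v = v!i"
proof -
  have "\<bar>v!i\<bar> \<le> R" using assms(1-3) by simp
  then show ?thesis
    using eval_signed_max_neuron[OF assms(1) _ _ assms(3), of "{i}" "\<lambda>_. 0" "\<lambda>_. 1" C 0] assms(2,4)
    by (simp add: copy_neuron_def)
qed

definition copy_prefix_layer :: "nat \<Rightarrow> nat \<Rightarrow> real \<Rightarrow> neuron list \<Rightarrow> layer" where
  "copy_prefix_layer n k C extra = map (copy_neuron n C) [0..<k] @ extra"

lemma length_copy_prefix_layer [simp]: "length (copy_prefix_layer n k C extra) = k + length extra"
  by (simp add: copy_prefix_layer_def)

lemma copy_prefix_layer_eq_Nil_iff [simp]: "copy_prefix_layer n k C extra = [] \<longleftrightarrow> k = 0 \<and> extra = []"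
  by (simp add: copy_prefix_layer_def)

lemma weight_lengths_copy_prefix_layer [simp]:
  "(\<forall>(w, b)\<in>set (copy_prefix_layer n k C extra). length w = n) \<longleftrightarrow>
     (\<forall>(w, b)\<in>set extra. length w = n)"
  by (auto simp: copy_prefix_layer_def copy_neuron_def signed_max_neuron_def)

lemma eval_copy_prefix_layer:
  assumes "length v = n" "k \<le> n" "\<forall>y\<in>set v. \<bar>y\<bar> \<le> R" "3*R < C"
  shows "eval_layer (copy_prefix_layer n k C extra) v = take k v @ map (\<lambda>nr. eval_neuron nr v) extra"
proof -
  have "map (\<lambda>i. eval_neuron (copy_neuron n C i) v) [0..<k] = take k v"
    using eval_copy_neuron[OF assms(1) _ assms(3,4)] assms(1,2) by (simp add: list_eq_iff_nth_eq)
  then show ?thesis by (simp add: copy_prefix_layer_def eval_layer_eq_map o_def)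
qed

definition diff_layer :: "nat \<Rightarrow> real \<Rightarrow> real list \<Rightarrow> layer" where
  "diff_layer d C s =
     copy_prefix_layer (d+1) (d+1) C [signed_max_neuron (d+1) C {..<d} (\<lambda>_. 1) (\<lambda>j. s!j) 0]"

definition dist_layer :: "nat \<Rightarrow> real \<Rightarrow> real list \<Rightarrow> real \<Rightarrow> layer" where
  "dist_layer d C s a =
     copy_prefix_layer (d+2) (d+1) C
       [signed_max_neuron (d+2) C (insert (d+1) {..<d})
          (\<lambda>j. if j = d+1 then 1 else -1) (\<lambda>j. if j = d+1 then 0 else s!j) a]"

definition update_layer :: "nat \<Rightarrow> real \<Rightarrow> layer" where
  "update_layer d C =
     copy_prefix_layer (d+2) d C [signed_max_neuron (d+2) C {d, d+1} (\<lambda>j. if j = d then 1 else -1) (\<lambda>_. 0) 0]"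

lemma eval_diff_layer:
  assumes "length x = d" "length s = d" "0 < d"
    and "\<forall>y\<in>set x. \<bar>y\<bar> \<le> R" "\<forall>y\<in>set s. \<bar>y\<bar> \<le> R" "\<bar>N\<bar> \<le> R" "3*R < C"
  shows "eval_layer (diff_layer d C s) (x @ [N]) = x @ [N, Max ((\<lambda>j. x!j - s!j) ` {..<d})]"
proof -
  have "eval_neuron (signed_max_neuron (d+1) C {..<d} (\<lambda>_. 1) (\<lambda>j. s!j) 0) (x @ [N])
      = Max ((\<lambda>j. 1 * ((x @ [N])!j - s!j)) ` {..<d}) + 0"
    by (rule eval_signed_max_neuron) (use assms in auto)
  also have "\<dots> = Max ((\<lambda>j. x!j - s!j) ` {..<d})"
    using assms(1) by (auto simp: nth_append intro!: arg_cong[where f=Max] image_cong)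
  finally show ?thesis
    using eval_copy_prefix_layer[of "x @ [N]" "d+1" "d+1" R C] assms by (simp add: diff_layer_def)
qed

lemma eval_dist_layer:
  assumes "length x = d" "length s = d" "0 < d"
    and "\<forall>y\<in>set x. \<bar>y\<bar> \<le> R" "\<forall>y\<in>set s. \<bar>y\<bar> \<le> R" "\<bar>N\<bar> \<le> R" "\<bar>P\<bar> \<le> R" "3*R < C"
  shows "eval_layer (dist_layer d C s a) (x @ [N, P])
           = x @ [N, max P (Max ((\<lambda>j. s!j - x!j) ` {..<d})) + a]"
proof -
  let ?\<sigma> = "\<lambda>j. if j = d+1 then 1 else -1" and ?c = "\<lambda>j. if j = d+1 then 0 else s!j"
  have "eval_neuron (signed_max_neuron (d+2) C (insert (d+1) {..<d}) ?\<sigma> ?c a) (x @ [N, P])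
      = Max ((\<lambda>j. ?\<sigma> j * ((x @ [N, P])!j - ?c j)) ` insert (d+1) {..<d}) + a"
    by (rule eval_signed_max_neuron) (use assms in auto)
  moreover have "(\<lambda>j. ?\<sigma> j * ((x @ [N, P])!j - ?c j)) ` {..<d} = (\<lambda>j. s!j - x!j) ` {..<d}"
    using assms(1) by (auto simp: nth_append intro!: image_cong)
  ultimately show ?thesis
    using eval_copy_prefix_layer[of "x @ [N, P]" "d+2" "d+1" R C] assms
    by (simp add: dist_layer_def nth_append Max_insert lessThan_empty_iff)
qed

lemma eval_update_layer:
  assumes "length x = d" "\<forall>y\<in>set x. \<bar>y\<bar> \<le> R" "\<bar>N\<bar> \<le> R" "\<bar>Q\<bar> \<le> R" "3*R < C"
  shows "eval_layer (update_layer d C) (x @ [N, Q]) = x @ [max N (-Q)]"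
proof -
  have "eval_neuron (signed_max_neuron (d+2) C {d, d+1} (\<lambda>j. if j = d then 1 else -1) (\<lambda>_. 0) 0) (x @ [N, Q])
      = Max ((\<lambda>j. (if j = d then 1 else -1) * ((x @ [N, Q])!j - 0)) ` {d, d+1}) + 0"
    by (rule eval_signed_max_neuron) (use assms in auto)
  then show ?thesis
    using eval_copy_prefix_layer[of "x @ [N, Q]" "d+2" d R C] assms
    by (simp add: update_layer_def nth_append)
qed

definition cone_block :: "nat \<Rightarrow> real \<Rightarrow> real list \<Rightarrow> real \<Rightarrow> net" where
  "cone_block d C s a = [diff_layer d C s, dist_layer d C s a, update_layer d C]"

lemma eval_cone_block:
  assumes len: "length x = d" "length s = d" "0 < d"
    and bounds: "\<forall>y\<in>set x. \<bar>y\<bar> \<le> M" "\<forall>y\<in>set s. \<bar>y\<bar> \<le> M" "2*M \<le> R"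
    and N: "\<bar>N\<bar> \<le> R" and Q: "\<bar>a + linf_dist x s\<bar> \<le> R" and C: "3*R < C"
  shows "eval_net (cone_block d C s a) (x @ [N]) = x @ [max N (-(a + linf_dist x s))]"
proof -
  define P where "P = Max ((\<lambda>j. x!j - s!j) ` {..<d})"
  have diff_bound: "\<bar>x!j - s!j\<bar> \<le> R" if "j < d" for j
  proof -
    have "\<bar>x!j\<bar> \<le> M" "\<bar>s!j\<bar> \<le> M" using that len bounds(1,2) by simp_all
    then show ?thesis using bounds(3) by linarith
  qed
  have x_R: "\<forall>y\<in>set x. \<bar>y\<bar> \<le> R" and s_R: "\<forall>y\<in>set s. \<bar>y\<bar> \<le> R"
    using bounds by (metis abs_ge_zero mult_2 add_increasing2 order.trans)+
  have "P \<in> (\<lambda>j. x!j - s!j) ` {..<d}" using len(3) unfolding P_def by (intro Max_in) auto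
  then have P: "\<bar>P\<bar> \<le> R" using diff_bound by auto
  have "max P (Max ((\<lambda>j. s!j - x!j) ` {..<d})) = linf_dist x s"
    using linf_dist_eq_max_signed_Max[OF len] by (simp add: P_def)
  then show ?thesis
    using eval_diff_layer[OF len x_R s_R N C] eval_dist_layer[OF len x_R s_R N P C]
      eval_update_layer[OF len(1) x_R N Q C]
    by (simp add: cone_block_def P_def add.commute)
qed

lemma eval_cone_blocks:
  assumes len: "length x = d" "0 < d" and x: "\<forall>y\<in>set x. \<bar>y\<bar> \<le> M" "2*M \<le> R"
    and pts: "\<forall>s\<in>set pts. length s = d \<and> (\<forall>y\<in>set s. \<bar>y\<bar> \<le> M) \<and> \<bar>g s + linf_dist x s\<bar> \<le> R"
    and N: "\<bar>N\<bar> \<le> R" and C: "3*R < C"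
  shows "eval_net (concat (map (\<lambda>s. cone_block d C s (g s)) pts)) (x @ [N])
           = x @ [Max (insert N ((\<lambda>s. -(g s + linf_dist x s)) ` set pts))]"
  using pts N
proof (induction pts arbitrary: N)
  case Nil
  then show ?case by simp
next
  case (Cons s pts)
  let ?h = "\<lambda>s. -(g s + linf_dist x s)"
  have "eval_net (cone_block d C s (g s)) (x @ [N]) = x @ [max N (?h s)]"
    using Cons.prems C by (intro eval_cone_block[OF len(1) _ len(2) x(1) _ x(2)]) auto
  moreover have "\<bar>max N (?h s)\<bar> \<le> R" using Cons.prems by auto
  ultimately show ?case using Cons by (simp add: Max_insert_max)
qed

(* Seeds the running maximum with |x| - B, which lies below -g' x once B is large. *)
definition init_layer :: "nat \<Rightarrow> real \<Rightarrow> real \<Rightarrow> layer" where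
  "init_layer d C B = copy_prefix_layer d d C [(replicate d 0, -B)]"

definition output_layer :: "nat \<Rightarrow> real \<Rightarrow> layer" where
  "output_layer d C = [copy_neuron (d+1) C d]"

definition cone_net :: "nat \<Rightarrow> real \<Rightarrow> real \<Rightarrow> real list list \<Rightarrow> (real list \<Rightarrow> real) \<Rightarrow> net" where
  "cone_net d C B pts g =
     init_layer d C B # concat (map (\<lambda>s. cone_block d C s (g s)) pts) @ [output_layer d C]"

lemma net_fun_cone_net:
  assumes x: "length x = d" "0 < d" "linf_norm x \<le> M"
    and pts: "\<forall>s\<in>set pts. length s = d \<and> linf_norm s \<le> M \<and> \<bar>g s\<bar> \<le> G"
    and B: "0 \<le> G" "3*M + G \<le> B" and C: "3*B < C"
  shows "net_fun (cone_net d C B pts g) x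
           = - Max (insert (linf_norm x - B) ((\<lambda>s. -(g s + linf_dist x s)) ` set pts))"
proof -
  let ?h = "\<lambda>s. -(g s + linf_dist x s)"
  let ?V = "Max (insert (linf_norm x - B) (?h ` set pts))"
  have "0 \<le> M" using x(3) linf_norm_nonneg[of x] by linarith
  have x_M: "\<forall>y\<in>set x. \<bar>y\<bar> \<le> M" using x(3) abs_le_linf_norm by fastforce
  have x_B: "\<forall>y\<in>set x. \<bar>y\<bar> \<le> B" using x_M \<open>0 \<le> M\<close> B by force
  have init: "eval_layer (init_layer d C B) x = x @ [linf_norm x - B]"
    using eval_copy_prefix_layer[of x d d B C] x_B x C
    by (simp add: init_layer_def eval_neuron_def linf_dist_replicate_0)
  have N0: "\<bar>linf_norm x - B\<bar> \<le> B" using linf_norm_nonneg[of x] x(3) B \<open>0 \<le> M\<close> by linarith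
  have h_bound: "\<bar>g s + linf_dist x s\<bar> \<le> B" if "s \<in> set pts" for s
    using that pts linf_dist_le_add[of x s] linf_dist_nonneg[of x s] x B by fastforce
  then have "\<forall>s\<in>set pts. length s = d \<and> (\<forall>y\<in>set s. \<bar>y\<bar> \<le> M) \<and> \<bar>g s + linf_dist x s\<bar> \<le> B"
    using pts abs_le_linf_norm by fastforce
  then have blocks: "eval_net (concat (map (\<lambda>s. cone_block d C s (g s)) pts)) (x @ [linf_norm x - B])
      = x @ [?V]"
    using eval_cone_blocks[OF x(1,2) x_M _ _ N0 C] B \<open>0 \<le> M\<close> by simp
  have "?V \<in> insert (linf_norm x - B) (?h ` set pts)" by (intro Max_in) auto
  then have "\<bar>?V\<bar> \<le> B" using h_bound N0 by (auto simp del: minus_add_distrib)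
  then have "eval_layer (output_layer d C) (x @ [?V]) = [?V]"
    using eval_copy_neuron[of "x @ [?V]" "d+1" d B C] x x_B C
    by (simp add: output_layer_def eval_layer_eq_map nth_append)
  then show ?thesis by (simp add: net_fun_def cone_net_def init blocks)
qed

lemma wf_layers_cone_blocks:
  "wf_layers (Suc d) (concat (map (\<lambda>s. cone_block d C s (g s)) pts) @ N) = wf_layers (Suc d) N"
  by (induction pts)
    (simp_all add: cone_block_def diff_layer_def dist_layer_def update_layer_def signed_max_neuron_def)

lemma scalar_net_cone_net: "scalar_net d (cone_net d C B pts g)"
  by (simp add: scalar_net_def wf_net_def cone_net_def init_layer_def output_layer_def
      wf_layers_cone_blocks copy_neuron_def signed_max_neuron_def)

lemma width_le_iff: "width N \<le> m \<longleftrightarrow> (\<forall>ly\<in>set N. length ly \<le> m)"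
  by (auto simp: width_def)

lemma width_cone_net: "width (cone_net d C B pts g) \<le> d + 2"
  by (auto simp: width_le_iff cone_net_def init_layer_def output_layer_def cone_block_def
      diff_layer_def dist_layer_def update_layer_def)

lemma cone_net_approx:
  assumes "0 < d" and dim: "\<forall>x\<in>K. length x = d" and M: "\<forall>x\<in>K. linf_norm x \<le> M"
    and lip: "\<forall>x1\<in>K. \<forall>x2\<in>K. \<bar>g x1 - g x2\<bar> \<le> linf_dist x1 x2"
    and pts: "set pts \<subseteq> K" "\<forall>x\<in>K. \<exists>s\<in>set pts. linf_dist x s \<le> \<delta>"
    and G: "0 \<le> G" "\<forall>s\<in>set pts. \<bar>g s\<bar> \<le> G" and B: "3*M + G \<le> B"
    and x: "x \<in> K"
  shows "\<bar>net_fun (cone_net d (3*B + 1) B pts g) x - g x\<bar> \<le> 2*\<delta>"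
proof -
  obtain s0 where s0: "s0 \<in> set pts" "linf_dist x s0 \<le> \<delta>" using bspec[OF pts(2) x] by blast
  have lip_x: "\<forall>s\<in>set pts. \<bar>g x - g s\<bar> \<le> linf_dist x s" using bspec[OF lip x] pts(1) by blast
  have net_value: "net_fun (cone_net d (3*B + 1) B pts g) x
      = - Max (insert (linf_norm x - B) ((\<lambda>s. -(g s + linf_dist x s)) ` set pts))"
    using x dim M \<open>0 < d\<close> pts(1) G B by (intro net_fun_cone_net[of x d M pts g G B]) auto
  have seed: "linf_norm x - B \<le> - g x"
  proof -
    have "linf_dist x s0 \<le> linf_norm x + linf_norm s0"
      using x s0(1) pts(1) dim by (intro linf_dist_le_add) auto
    moreover have "linf_norm x \<le> M" "linf_norm s0 \<le> M" using x s0(1) pts(1) M by auto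
    ultimately show ?thesis using lip_x s0(1) G(2) B by (smt (verit))
  qed
  show ?thesis
    unfolding net_value by (rule mcshane_approx[of "set pts" g x linf_dist, OF finite_set lip_x seed s0])
qed

lemma exists_net_dim_0:
  assumes "\<forall>x\<in>K. length x = 0"
  shows "\<exists>N. scalar_net 0 N \<and> width N \<le> 2 \<and> (\<forall>x\<in>K. net_fun N x = g x)"
proof -
  define N :: net where "N = [[([], - g [])]]"
  have "net_fun N [] = g []" by (simp add: N_def net_fun_def eval_layer_def linf_dist_def linf_norm_def)
  moreover have "scalar_net 0 N" "width N \<le> 2" by (simp_all add: N_def scalar_net_def wf_net_def width_def)
  ultimately show ?thesis using assms by auto
qed

theorem theorem1:
  fixes d :: nat and K :: "real list set" and g' :: "real list \<Rightarrow> real"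
  assumes dim: "\<forall>x\<in>K. length x = d"
    and bdd: "\<exists>M. \<forall>x\<in>K. linf_norm x \<le> M"
    and lip: "\<forall>x1\<in>K. \<forall>x2\<in>K. \<bar>g' x1 - g' x2\<bar> \<le> linf_dist x1 x2"
    and eps: "\<epsilon> > 0"
  shows "\<exists>N. scalar_net d N \<and> width N \<le> d + 2 \<and>
           (\<forall>x\<in>K. \<bar>net_fun N x - g' x\<bar> \<le> \<epsilon>)"
proof (cases "d = 0")
  case True
  then show ?thesis using exists_net_dim_0[of K g'] dim eps by fastforce
next
  case False
  obtain M where M: "\<forall>x\<in>K. linf_norm x \<le> M" using bdd by blast
  obtain S where S: "finite S" "S \<subseteq> K" "\<forall>x\<in>K. \<exists>s\<in>S. linf_dist x s \<le> \<epsilon>/2"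
    using finite_linf_cover[of "\<epsilon>/2" K d M] eps dim M by auto
  obtain pts where pts: "set pts = S" using finite_list[OF S(1)] by (elim exE)
  define G where "G = Max (insert 0 ((\<lambda>s. \<bar>g' s\<bar>) ` S))"
  define B where "B = 3*M + G"
  have G: "0 \<le> G" "\<forall>s\<in>S. \<bar>g' s\<bar> \<le> G" using S(1) by (auto simp: G_def)
  have "\<bar>net_fun (cone_net d (3*B + 1) B pts g') x - g' x\<bar> \<le> \<epsilon>" if "x \<in> K" for x
    using cone_net_approx[of d K M g' pts "\<epsilon>/2" G B x] False dim M lip S(2,3) G that
    by (simp add: pts B_def)
  then show ?thesis using scalar_net_cone_net width_cone_net by blast
qed

end
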